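(* $\operatorname{Sort}\mid_{\mathrm{W}}\operatorname{C}_\mathbb{R}$, i.e. $\operatorname{Sort}\not\le_{\mathrm{W}}\operatorname{C}_\mathbb{R}$ and $\operatorname{C}_\mathbb{R}\not\le_{\mathrm{W}}\operatorname{Sort}$.
   Context: Represented spaces: a representation of a set $X$ is a partial surjection $\delta_X:\subseteq\mathbb{N}^\mathbb{N}\to X$. For a partial multi-valued function $f:\subseteq X\rightrightarrows Y$, a realizer is a partial $F:\subseteq\mathbb{N}^\mathbb{N}\to\mathbb{N}^\mathbb{N}$ with $\delta_Y(F(p))\in f(\delta_X(p))$ for all $p$ with $\delta_X(p)\in\mathrm{dom}(f)$. Weihrauch reducibility: $f\le_{\mathrm{W}} g$ iff there are computable partial $H:\subseteq\mathbb{N}^\mathbb{N}\times\mathbb{N}^\mathbb{N}\to\mathbb{N}^\mathbb{N}$ and $K:\subseteq\mathbb{N}^\mathbb{N}\to\mathbb{N}^\mathbb{N}$ such that $p\mapsto H(p,G(K(p)))$ is a realizer of $f$ for every realizer $G$ of $g$. $\operatorname{Sort}:2^\mathbb{N}\to 2^\mathbb{N}$ is defined by $\operatorname{Sort}(p)=0^n1^\mathbb{N}$ if $p$ contains exactly $n$ occurrences of $0$, and $\operatorname{Sort}(p)=0^\mathbb{N}$ if $p$ contains infinitely many occurrences of $0$. $\mathbb{R}$ carries the Cauchy representation (names are sequences of rationals $(q_i)$ with $|q_i-q_j|\le2^{-i}$ for $j\ge i$, naming their limit). $\mathcal{A}_-(\mathbb{R})$ is the space of closed subsets of $\mathbb{R}$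 with negative information: a name of closed $A$ is an enumeration of rational open intervals whose union is $\mathbb{R}\setminus A$. Closed choice $\operatorname{C}_\mathbb{R}:\subseteq\mathcal{A}_-(\mathbb{R})\rightrightarrows\mathbb{R}$ maps each nonempty closed $A$ to the set $A$ (any element of $A$ is a valid output). *)

theory Defs
  imports "HOL-Analysis.Analysis" "HOL-Library.Nat_Bijection"
begin

type_synonym baire = "nat \<Rightarrow> nat"

text \<open>A partial recursive function of arity n is modelled as a map on nat lists
(only its values on lists of length n matter).\<close>

fun prec :: "(nat list \<Rightarrow> nat option) \<Rightarrow> (nat list \<Rightarrow> nat option) \<Rightarrow> nat \<Rightarrow> nat list \<Rightarrow> nat option" where
  "prec f g 0 xs = f xs"
| "prec f g (Suc y) xs = (case prec f g y xs of None \<Rightarrow> None | Some r \<Rightarrow> g (y # r # xs))"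

inductive partrec :: "nat \<Rightarrow> (nat list \<Rightarrow> nat option) \<Rightarrow> bool" where
  pr_zero: "partrec n (\<lambda>_. Some 0)"
| pr_succ: "partrec 1 (\<lambda>xs. Some (Suc (hd xs)))"
| pr_proj: "i < n \<Longrightarrow> partrec n (\<lambda>xs. Some (xs ! i))"
| pr_comp: "partrec m f \<Longrightarrow> length gs = m \<Longrightarrow> (\<forall>g\<in>set gs. partrec n g) \<Longrightarrow>
     partrec n (\<lambda>xs. if (\<forall>g\<in>set gs. g xs \<noteq> None) then f (map (\<lambda>g. the (g xs)) gs) else None)"
| pr_prim: "partrec n f \<Longrightarrow> partrec (n + 2) g \<Longrightarrow>
     partrec (n + 1) (\<lambda>xs. prec f g (hd xs) (tl xs))"
| pr_mu: "partrec (n + 1) f \<Longrightarrow>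
     partrec n (\<lambda>xs. if (\<exists>y. f (y # xs) = Some 0 \<and> (\<forall>z<y. \<exists>v. f (z # xs) = Some (Suc v)))
                     then Some (LEAST y. f (y # xs) = Some 0 \<and> (\<forall>z<y. \<exists>v. f (z # xs) = Some (Suc v)))
                     else None)"

definition computable_nat :: "(nat \<Rightarrow> nat) \<Rightarrow> bool" where
  "computable_nat a \<longleftrightarrow> (\<exists>h. partrec 1 h \<and> (\<forall>x. h [x] = Some (a x)))"

text \<open>A total computable a : nat \<Rightarrow> nat determines the partial function
  F_a(p)(n) = a(<n, p[k]>) - 1 where k is least with a(<n, p[k]>) > 0;
  F_a(p) is defined iff such k exists for every n.  A partial function on
  Baire space is computable iff it is (a restriction of) some F_a with a computable.\<close>

definition assoc_code :: "nat \<Rightarrow> nat list \<Rightarrow> nat" where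
  "assoc_code n w = prod_encode (n, list_encode w)"

definition assoc_eval :: "(nat \<Rightarrow> nat) \<Rightarrow> baire \<Rightarrow> baire option" where
  "assoc_eval a p =
     (if (\<forall>n. \<exists>k. a (assoc_code n (map p [0..<k])) > 0)
      then Some (\<lambda>n. a (assoc_code n (map p [0..<(LEAST k. a (assoc_code n (map p [0..<k])) > 0)])) - 1)
      else None)"

definition baire_pair :: "baire \<Rightarrow> baire \<Rightarrow> baire" where
  "baire_pair p q = (\<lambda>n. if even n then p (n div 2) else q (n div 2))"

text \<open>Representations: partial maps delta :: baire \<Rightarrow> 'a option (surjective onto 'a).
  Partial multi-valued problems: domain D and value map f :: 'a \<Rightarrow> 'b set.\<close>

definition is_realizer ::
  "(baire \<Rightarrow> 'a option) \<Rightarrow> (baire \<Rightarrow> 'b option) \<Rightarrow> 'a set \<Rightarrow> ('a \<Rightarrow> 'b set)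
     \<Rightarrow> (baire \<Rightarrow> baire option) \<Rightarrow> bool" where
  "is_realizer dX dY D f F \<longleftrightarrow>
     (\<forall>p x. dX p = Some x \<longrightarrow> x \<in> D \<longrightarrow>
        (\<exists>q y. F p = Some q \<and> dY q = Some y \<and> y \<in> f x))"

definition weihrauch_le ::
  "(baire \<Rightarrow> 'a option) \<Rightarrow> (baire \<Rightarrow> 'b option) \<Rightarrow> 'a set \<Rightarrow> ('a \<Rightarrow> 'b set) \<Rightarrow>
   (baire \<Rightarrow> 'c option) \<Rightarrow> (baire \<Rightarrow> 'd option) \<Rightarrow> 'c set \<Rightarrow> ('c \<Rightarrow> 'd set) \<Rightarrow> bool" where
  "weihrauch_le dX dY D f dZ dW E g \<longleftrightarrow>
     (\<exists>aH aK. computable_nat aH \<and> computable_nat aK \<and>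
        (\<forall>G. is_realizer dZ dW E g G \<longrightarrow>
           is_realizer dX dY D f
             (\<lambda>p. case assoc_eval aK p of
                     None \<Rightarrow> None
                   | Some k \<Rightarrow> (case G k of None \<Rightarrow> None
                                | Some r \<Rightarrow> assoc_eval aH (baire_pair p r)))))"

definition delta_cantor :: "baire \<Rightarrow> baire option" where
  "delta_cantor p = (if (\<forall>n. p n \<le> 1) then Some p else None)"

definition Sort_fun :: "baire \<Rightarrow> baire" where
  "Sort_fun p = (if finite {i. p i = 0}
                 then (\<lambda>i. if i < card {i. p i = 0} then 0 else 1)
                 else (\<lambda>_. 0))"

definition Sort_dom :: "baire set" where
  "Sort_dom = {p. \<forall>n. p n \<le> 1}"

definition Sort_prob :: "baire \<Rightarrow> baire set" where
  "Sort_prob p = {Sort_fun p}"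

definition nu_rat :: "nat \<Rightarrow> rat" where
  "nu_rat n = (case prod_decode n of (a, b) \<Rightarrow> Fract (int_decode a) (int b + 1))"

definition delta_real :: "baire \<Rightarrow> real option" where
  "delta_real p =
     (if (\<forall>i j. i \<le> j \<longrightarrow> \<bar>nu_rat (p i) - nu_rat (p j)\<bar> \<le> 1 / 2 ^ i)
      then Some (lim (\<lambda>i. real_of_rat (nu_rat (p i))))
      else None)"

text \<open>Negative information representation of closed subsets of R:
  p n = 0 means "no interval", p n = Suc m codes the rational open interval
  (nu_rat a, nu_rat b) with (a, b) = prod_decode m; p names the complement of
  the union of the enumerated intervals.\<close>
definition code_interval :: "nat \<Rightarrow> real set" where
  "code_interval c = (case c of 0 \<Rightarrow> {}
      | Suc m \<Rightarrow> (case prod_decode m of (a, b) \<Rightarrow>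
           {real_of_rat (nu_rat a) <..< real_of_rat (nu_rat b)}))"

definition delta_closed :: "baire \<Rightarrow> real set option" where
  "delta_closed p = Some (- (\<Union>n. code_interval (p n)))"

definition CR_dom :: "real set set" where
  "CR_dom = {A. closed A \<and> A \<noteq> {}}"

definition CR_prob :: "real set \<Rightarrow> real set" where
  "CR_prob A = A"

end

theory Submission
  imports Defs
begin

text \<open>\<open>Sort \<not>\<le>\<^sub>W C\<^sub>\<real>\<close>: let \<open>K, H\<close> reduce \<open>Sort\<close> to closed choice. For \<open>p\<close> with finitely many
  zeros, a point \<open>l \<in> K(p)\<close> and a finite prefix of its name force the bit of \<open>Sort(p)\<close> at
  position \<open>#zeros(p)\<close> to be 1, while adding one more zero far out makes it 0. So for inputs
  \<open>p[m := 0]\<close> with large \<open>m\<close> no chosen point lies near \<open>l\<close>, and by compactness of \<open>[-n, n]\<close>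
  some such input has \<open>K\<close>-value disjoint from \<open>[-n, n]\<close>, already on a finite prefix. Iterating
  over \<open>n\<close> yields a binary sequence whose closed set is empty, a contradiction.

  \<open>C\<^sub>\<real> \<not>\<le>\<^sub>W Sort\<close>: \<open>Sort\<close> has only countably many values, so a reduction yields countably
  many continuous maps \<open>F\<^sub>n\<close> which jointly choose a point from every nonempty closed set. A name
  of a closed set defeating all of them is built in stages, keeping a compact set \<open>R\<close> of
  candidate points disjoint from the intervals enumerated so far. At stage \<open>n\<close> either no
  extension keeping most of the measure of \<open>R\<close> lets \<open>F\<^sub>n\<close> decide a fixed coordinate \<open>i\<close> of its
  output, or some extension does, and then the small interval around every point that output
  can name is enumerated. The total loss of measure stays below 1, so the candidate sets shrink
  to a nonempty part of the closed set, while no \<open>F\<^sub>n\<close> outputs a point of it.\<close>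

section \<open>Prefix-continuous partial maps on Baire space\<close>

definition prefix_continuous :: "(baire \<Rightarrow> baire option) \<Rightarrow> bool" where
  "prefix_continuous F \<longleftrightarrow>
     (\<forall>p q n. F p = Some q \<longrightarrow>
        (\<exists>N. \<forall>p' q'. (\<forall>t<N. p' t = p t) \<longrightarrow> F p' = Some q' \<longrightarrow> q' n = q n))"

lemma prefix_continuousD:
  "prefix_continuous F \<Longrightarrow> F p = Some q \<Longrightarrow>
     \<exists>N. \<forall>p' q'. (\<forall>t<N. p' t = p t) \<longrightarrow> F p' = Some q' \<longrightarrow> q' n = q n"
  unfolding prefix_continuous_def by blast

lemma assoc_eval_SomeD:
  assumes "assoc_eval a p = Some q"
  shows "\<exists>k. a (assoc_code n (map p [0..<k])) > 0"
    and "q n = a (assoc_code n (map p [0..<(LEAST k. a (assoc_code n (map p [0..<k])) > 0)])) - 1"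
  using assms unfolding assoc_eval_def by (auto split: if_splits)

lemma Least_prefix_cong:
  assumes "P (map p [0..<k])" and "\<forall>t<k. p' t = p t"
  shows "(LEAST k. P (map p' [0..<k])) = (LEAST k. P (map p [0..<k]))"
proof -
  have prefix_eq: "map p' [0..<j] = map p [0..<j]" if "j \<le> k" for j
    using assms(2) that by auto
  have least_le: "(LEAST k. P (map p [0..<k])) \<le> k"
    using assms(1) by (rule Least_le)
  show ?thesis
  proof (rule Least_equality)
    show "P (map p' [0..<(LEAST k. P (map p [0..<k]))])"
      using LeastI[of "\<lambda>k. P (map p [0..<k])", OF assms(1)] prefix_eq[OF least_le] by (simp del: map_eq_conv)
  next
    fix j assume "P (map p' [0..<j])"
    then show "(LEAST k. P (map p [0..<k])) \<le> j"
      using least_le prefix_eq[of j] by (cases "j \<le> k") (auto intro: Least_le)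
  qed
qed

lemma prefix_continuous_assoc_eval: "prefix_continuous (assoc_eval a)"
  unfolding prefix_continuous_def
proof (intro allI impI)
  fix p q n assume q: "assoc_eval a p = Some q"
  let ?P = "\<lambda>w. a (assoc_code n w) > 0"
  obtain k where k: "?P (map p [0..<k])"
    using assoc_eval_SomeD(1)[OF q] by blast
  define l where "l = (LEAST k. ?P (map p [0..<k]))"
  have "l \<le> k" unfolding l_def using k by (rule Least_le)
  show "\<exists>N. \<forall>p' q'. (\<forall>t<N. p' t = p t) \<longrightarrow> assoc_eval a p' = Some q' \<longrightarrow> q' n = q n"
  proof (intro exI allI impI)
    fix p' q' assume agree: "\<forall>t<k. p' t = p t" and q': "assoc_eval a p' = Some q'"
    have "(LEAST k. ?P (map p' [0..<k])) = l"
      unfolding l_def using k agree by (rule Least_prefix_cong)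
    moreover have "map p' [0..<l] = map p [0..<l]"
      using agree \<open>l \<le> k\<close> by auto
    ultimately show "q' n = q n"
      using assoc_eval_SomeD(2)[OF q, of n] assoc_eval_SomeD(2)[OF q', of n]
      unfolding l_def by (simp del: map_eq_conv)
  qed
qed

lemma prefix_continuous_pair_left:
  assumes "prefix_continuous H"
  shows "prefix_continuous (\<lambda>p. H (baire_pair p r))"
  unfolding prefix_continuous_def
proof (intro allI impI)
  fix p q n assume "H (baire_pair p r) = Some q"
  then obtain N where N: "\<forall>z q'. (\<forall>t<N. z t = baire_pair p r t) \<longrightarrow> H z = Some q' \<longrightarrow> q' n = q n"
    using prefix_continuousD[OF assms] by blast
  show "\<exists>N. \<forall>p' q'. (\<forall>t<N. p' t = p t) \<longrightarrow> H (baire_pair p' r) = Some q' \<longrightarrow> q' n = q n"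
  proof (intro exI allI impI)
    fix p' q' assume "\<forall>t<N. p' t = p t" and q': "H (baire_pair p' r) = Some q'"
    then have "\<forall>t<N. baire_pair p' r t = baire_pair p r t"
      unfolding baire_pair_def by auto
    then show "q' n = q n" using N q' by blast
  qed
qed

lemma prefixes_agree_mono:
  fixes P :: "nat \<Rightarrow> nat \<Rightarrow> 'a"
  assumes agree: "\<And>n. \<forall>t<L n. P (Suc n) t = P n t" and "mono L" and "n \<le> m"
  shows "\<forall>t<L n. P m t = P n t"
  using \<open>n \<le> m\<close>
proof (induction m rule: dec_induct)
  case (step m)
  then show ?case using agree[of m] monoD[OF \<open>mono L\<close> step(1)] by auto
qed simp

lemma diagonal_prefix_agree:
  fixes P :: "nat \<Rightarrow> nat \<Rightarrow> 'a"
  assumes agree: "\<And>n. \<forall>t<L n. P (Suc n) t = P n t" and "strict_mono L"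
  shows "\<forall>t<L n. P (Suc t) t = P n t"
proof (intro allI impI)
  fix t assume "t < L n"
  have mono: "mono L" using \<open>strict_mono L\<close> by (rule strict_mono_mono)
  show "P (Suc t) t = P n t"
  proof (cases "Suc t \<le> n")
    case True
    have "t < L (Suc t)" using seq_suble[OF \<open>strict_mono L\<close>, of "Suc t"] by simp
    then show ?thesis using prefixes_agree_mono[OF agree mono True] by simp
  next
    case False
    then show ?thesis using prefixes_agree_mono[OF agree mono, of n "Suc t"] \<open>t < L n\<close> by simp
  qed
qed

section \<open>Cauchy names and names of closed sets\<close>

lemma nu_rat_surj: "\<exists>n. nu_rat n = q"
proof -
  obtain a b where q: "q = Fract a b" and b: "0 < b" by (cases q rule: Rat_cases) auto
  have "nu_rat (prod_encode (int_encode a, nat (b - 1))) = Fract a b"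
    unfolding nu_rat_def using b by (simp add: int_encode_inverse)
  then show ?thesis using q by blast
qed

lemma nu_rat_dense:
  fixes x :: real assumes "e > 0"
  shows "\<exists>n. \<bar>real_of_rat (nu_rat n) - x\<bar> < e"
proof -
  obtain r where "r \<in> \<rat>" "x - e < r" "r < x + e"
    using Rats_dense_in_real[of "x - e" "x + e"] assms by auto
  moreover from \<open>r \<in> \<rat>\<close> obtain q where "r = of_rat q" by (auto elim: Rats_cases)
  moreover obtain n where "nu_rat n = q" using nu_rat_surj by blast
  ultimately show ?thesis by (intro exI[of _ n]) auto
qed

lemma code_interval_surj: "\<exists>c. code_interval c = {real_of_rat a <..< real_of_rat b}"
proof -
  obtain m n where "nu_rat m = a" "nu_rat n = b" using nu_rat_surj by metis
  then show ?thesis by (intro exI[of _ "Suc (prod_encode (m, n))"]) (simp add: code_interval_def)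
qed

lemma exists_fast_name: "\<exists>c. \<forall>i. \<bar>real_of_rat (nu_rat (c i)) - x\<bar> \<le> 1 / 2 ^ (i + 2)"
proof -
  have "\<exists>n. \<bar>real_of_rat (nu_rat n) - x\<bar> \<le> 1 / 2 ^ (i + 2)" for i
  proof -
    obtain n where "\<bar>real_of_rat (nu_rat n) - x\<bar> < 1 / 2 ^ (i + 2)"
      using nu_rat_dense[of "1 / 2 ^ (i + 2)" x] by auto
    then show ?thesis by (intro exI[of _ n]) simp
  qed
  then show ?thesis by metis
qed

lemma inverse_pow2_tendsto_zero: "(\<lambda>i. 1 / 2 ^ i :: real) \<longlonglongrightarrow> 0"
  using LIMSEQ_inverse_realpow_zero[of 2] by (simp add: divide_inverse)

lemma delta_real_eqI:
  assumes close: "\<And>i. \<bar>real_of_rat (nu_rat (r i)) - x\<bar> \<le> 1 / 2 ^ (i + 1)"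
  shows "delta_real r = Some x"
proof -
  have "\<bar>nu_rat (r i) - nu_rat (r j)\<bar> \<le> 1 / 2 ^ i" if "i \<le> j" for i j
  proof -
    have "(1::real) / 2 ^ (j + 1) \<le> 1 / 2 ^ (i + 1)"
      using that by (intro divide_left_mono power_increasing) auto
    then have "\<bar>real_of_rat (nu_rat (r i)) - real_of_rat (nu_rat (r j))\<bar> \<le> 1 / 2 ^ i"
      using close[of i] close[of j] by simp
    then have "real_of_rat \<bar>nu_rat (r i) - nu_rat (r j)\<bar> \<le> real_of_rat (1 / 2 ^ i)"
      by (simp add: of_rat_diff of_rat_divide of_rat_power flip: abs_of_rat)
    then show ?thesis by (simp only: of_rat_less_eq)
  qed
  moreover have "(\<lambda>i. real_of_rat (nu_rat (r i))) \<longlonglongrightarrow> x"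
  proof (rule tendsto_sandwich[of "\<lambda>i. x - 1 / 2 ^ i" _ _ "\<lambda>i. x + 1 / 2 ^ i"])
    have bound: "\<bar>real_of_rat (nu_rat (r i)) - x\<bar> \<le> 1 / 2 ^ i" for i
      using close[of i] by (simp add: order_trans)
    have "x - 1 / 2 ^ i \<le> real_of_rat (nu_rat (r i)) \<and> real_of_rat (nu_rat (r i)) \<le> x + 1 / 2 ^ i" for i
      using bound[of i] unfolding abs_le_iff by linarith
    then show "\<forall>\<^sub>F i in sequentially. x - 1 / 2 ^ i \<le> real_of_rat (nu_rat (r i))"
      and "\<forall>\<^sub>F i in sequentially. real_of_rat (nu_rat (r i)) \<le> x + 1 / 2 ^ i"
      by (simp_all add: always_eventually)
    show "(\<lambda>i. x - 1 / 2 ^ i) \<longlonglongrightarrow> x" "(\<lambda>i. x + 1 / 2 ^ i) \<longlonglongrightarrow> x"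
      using tendsto_diff[OF tendsto_const inverse_pow2_tendsto_zero, of x]
        tendsto_add[OF tendsto_const inverse_pow2_tendsto_zero, of x] by simp_all
  qed
  ultimately show ?thesis unfolding delta_real_def by (simp add: limI)
qed

lemma fast_name_delta_real:
  assumes "\<And>i. \<bar>real_of_rat (nu_rat (c i)) - x\<bar> \<le> 1 / 2 ^ (i + 2)"
  shows "delta_real c = Some x"
proof (rule delta_real_eqI)
  fix i
  have "(1::real) / 2 ^ (i + 2) \<le> 1 / 2 ^ (i + 1)"
    by (intro divide_left_mono power_increasing) auto
  then show "\<bar>real_of_rat (nu_rat (c i)) - x\<bar> \<le> 1 / 2 ^ (i + 1)"
    using assms[of i] by linarith
qed

lemma delta_real_surj: "\<exists>r. delta_real r = Some x"
  using exists_fast_name fast_name_delta_real by metis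

lemma delta_real_approx:
  assumes "delta_real q = Some y"
  shows "\<bar>real_of_rat (nu_rat (q i)) - y\<bar> \<le> 1 / 2 ^ i"
proof -
  let ?X = "\<lambda>i. real_of_rat (nu_rat (q i))"
  have cauchy_rat: "\<forall>i j. i \<le> j \<longrightarrow> \<bar>nu_rat (q i) - nu_rat (q j)\<bar> \<le> 1 / 2 ^ i"
    and y: "y = lim ?X"
    using assms unfolding delta_real_def by (auto split: if_splits)
  have cauchy: "\<bar>?X i - ?X j\<bar> \<le> 1 / 2 ^ i" if "i \<le> j" for i j
  proof -
    have "real_of_rat \<bar>nu_rat (q i) - nu_rat (q j)\<bar> \<le> real_of_rat (1 / 2 ^ i)"
      using cauchy_rat that by (simp only: of_rat_less_eq)
    then show ?thesis by (simp add: of_rat_diff of_rat_divide of_rat_power flip: abs_of_rat)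
  qed
  have "Cauchy ?X"
  proof (rule metric_CauchyI)
    fix e :: real assume "e > 0"
    then have "\<forall>\<^sub>F M in sequentially. 1 / 2 ^ M < e / 2"
      by (intro order_tendstoD(2)[OF inverse_pow2_tendsto_zero]) simp
    then obtain M where M: "1 / 2 ^ M < e / 2"
      by (auto simp: eventually_sequentially)
    have "dist (?X m) (?X n) < e" if "M \<le> m" "M \<le> n" for m n
      using cauchy[OF that(1)] cauchy[OF that(2)] M by (simp add: dist_real_def)
    then show "\<exists>M. \<forall>m\<ge>M. \<forall>n\<ge>M. dist (?X m) (?X n) < e" by blast
  qed
  then have "?X \<longlonglongrightarrow> y"
    unfolding y by (simp add: Cauchy_convergent_iff convergent_LIMSEQ_iff)
  then have "(\<lambda>j. \<bar>?X i - ?X j\<bar>) \<longlonglongrightarrow> \<bar>?X i - y\<bar>"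
    by (intro tendsto_intros)
  then show ?thesis by (rule Lim_bounded[where M = i]) (simp add: cauchy)
qed

lemma delta_real_prefix_name:
  assumes c: "\<And>i. \<bar>real_of_rat (nu_rat (c i)) - l\<bar> \<le> 1 / 2 ^ (i + 2)"
    and close: "\<bar>y - l\<bar> \<le> 1 / 2 ^ (N + 1)"
  shows "\<exists>r. delta_real r = Some y \<and> (\<forall>t<N. r t = c t)"
proof -
  obtain c' where c': "\<forall>i. \<bar>real_of_rat (nu_rat (c' i)) - y\<bar> \<le> 1 / 2 ^ (i + 2)"
    using exists_fast_name by blast
  define r where "r i = (if i < N then c i else c' i)" for i
  have "\<bar>real_of_rat (nu_rat (r i)) - y\<bar> \<le> 1 / 2 ^ (i + 1)" for i
  proof (cases "i < N")
    case True
    have "(1::real) / 2 ^ (N + 1) \<le> 1 / 2 ^ (i + 2)"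
      using True by (intro divide_left_mono power_increasing) auto
    then show ?thesis using True c[of i] close by (simp add: r_def)
  next
    case False
    have "(1::real) / 2 ^ (i + 2) \<le> 1 / 2 ^ (i + 1)"
      by (intro divide_left_mono power_increasing) auto
    then show ?thesis using False c'[rule_format, of i] by (simp add: r_def)
  qed
  then show ?thesis by (intro exI[of _ r]) (simp add: delta_real_eqI r_def)
qed

definition closed_of_name :: "baire \<Rightarrow> real set" where
  "closed_of_name p = - (\<Union>n. code_interval (p n))"

lemma delta_closed_eq: "delta_closed p = Some (closed_of_name p)"
  unfolding delta_closed_def closed_of_name_def by simp

lemma open_code_interval: "open (code_interval c)"
  unfolding code_interval_def by (auto split: nat.splits prod.splits)

lemma closed_closed_of_name: "closed (closed_of_name p)"
  unfolding closed_of_name_def using open_code_interval by (intro closed_Compl open_UN) auto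

section \<open>Sort is not continuously reducible to closed choice\<close>

lemma finite_zeros_if_eventually_one:
  fixes p :: baire
  assumes "\<forall>i\<ge>L. p i = 1"
  shows "finite {i. p i = 0}"
proof (rule finite_subset)
  show "{i. p i = 0} \<subseteq> {..<L}"
  proof
    fix i assume "i \<in> {i. p i = 0}"
    then show "i \<in> {..<L}" using assms by (cases "L \<le> i") auto
  qed
qed simp

lemma Sort_fun_at_card_zeros: "finite {i. p i = 0} \<Longrightarrow> Sort_fun p (card {i. p i = 0}) = 1"
  unfolding Sort_fun_def by simp

lemma Sort_fun_add_zero:
  assumes "finite {i. p i = 0}" and "p m \<noteq> 0"
  shows "Sort_fun (p(m := 0)) (card {i. p i = 0}) = 0"
proof -
  have zeros: "{i. (p(m := 0)) i = 0} = insert m {i. p i = 0}" by auto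
  then have "card {i. (p(m := 0)) i = 0} = Suc (card {i. p i = 0})" using assms by simp
  then show ?thesis unfolding Sort_fun_def using zeros assms by simp
qed

definition Sort_reduction :: "(baire \<Rightarrow> baire option) \<Rightarrow> (baire \<Rightarrow> baire option) \<Rightarrow> bool" where
  "Sort_reduction K H \<longleftrightarrow>
     (\<forall>p. (\<forall>n. p n \<le> 1) \<longrightarrow>
        (\<exists>k. K p = Some k \<and> closed_of_name k \<noteq> {} \<and>
           (\<forall>x r. x \<in> closed_of_name k \<longrightarrow> delta_real r = Some x \<longrightarrow>
              H (baire_pair p r) = Some (Sort_fun p))))"

lemma Sort_reductionD:
  assumes "Sort_reduction K H" and "\<forall>n. p n \<le> 1" and "K p = Some k"
    and "x \<in> closed_of_name k" and "delta_real r = Some x"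
  shows "H (baire_pair p r) = Some (Sort_fun p)"
proof -
  obtain k' where "K p = Some k'"
    and "\<forall>x r. x \<in> closed_of_name k' \<longrightarrow> delta_real r = Some x \<longrightarrow> H (baire_pair p r) = Some (Sort_fun p)"
    using assms(1,2) unfolding Sort_reduction_def by blast
  then show ?thesis using assms(3-5) by simp
qed

lemma closed_of_name_limit:
  assumes "prefix_continuous K" and "K p = Some k"
    and agree: "\<And>j. \<forall>t<j. ps j t = p t" and ks: "\<And>j. K (ps j) = Some (ks j)"
    and y: "\<And>j. y j \<in> closed_of_name (ks j)" and "y \<longlonglongrightarrow> l"
  shows "l \<in> closed_of_name k"
proof (rule ccontr)
  assume "l \<notin> closed_of_name k"
  then obtain i where "l \<in> code_interval (k i)" by (auto simp: closed_of_name_def)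
  then obtain e where "e > 0" and ball: "ball l e \<subseteq> code_interval (k i)"
    using open_code_interval open_contains_ball by blast
  obtain N where N: "\<forall>p' k'. (\<forall>t<N. p' t = p t) \<longrightarrow> K p' = Some k' \<longrightarrow> k' i = k i"
    using prefix_continuousD[OF assms(1), OF assms(2)] by blast
  obtain J where J: "\<forall>j\<ge>J. dist (y j) l < e"
    using \<open>y \<longlonglongrightarrow> l\<close> \<open>e > 0\<close> unfolding lim_sequentially by blast
  define j where "j = max J N"
  have "\<forall>t<N. ps j t = p t" using agree[of j] unfolding j_def by simp
  then have "ks j i = k i" using N ks[of j] by blast
  moreover have "y j \<in> ball l e" using J unfolding j_def by (simp add: dist_commute)
  ultimately have "y j \<in> code_interval (ks j i)" using ball by auto
  then show False using y[of j] by (auto simp: closed_of_name_def)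
qed

text \<open>Adding a zero beyond position \<open>N\<close> turns the bit of \<open>Sort p\<close> at position \<open>#zeros(p)\<close>
  from 1 into 0, whereas \<open>H\<close> sees only a prefix of the name of the chosen point.\<close>

lemma Sort_reduction_isolates:
  assumes red: "Sort_reduction K H" and "prefix_continuous H"
    and binary: "\<forall>n. p n \<le> 1" and fin: "finite {i. p i = 0}"
    and "K p = Some k" and "l \<in> closed_of_name k"
  shows "\<exists>N. \<forall>m k' y. N \<le> m \<longrightarrow> p m \<noteq> 0 \<longrightarrow> K (p(m := 0)) = Some k' \<longrightarrow>
           y \<in> closed_of_name k' \<longrightarrow> 1 / 2 ^ (N + 1) < \<bar>y - l\<bar>"
proof -
  obtain c where c: "\<And>i. \<bar>real_of_rat (nu_rat (c i)) - l\<bar> \<le> 1 / 2 ^ (i + 2)"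
    using exists_fast_name by blast
  have H: "H (baire_pair p c) = Some (Sort_fun p)"
    by (rule Sort_reductionD[OF red, OF binary \<open>K p = Some k\<close> \<open>l \<in> closed_of_name k\<close>
          fast_name_delta_real[OF c]])
  define j where "j = card {i. p i = 0}"
  obtain N where N: "\<forall>z w. (\<forall>t<N. z t = baire_pair p c t) \<longrightarrow> H z = Some w \<longrightarrow> w j = Sort_fun p j"
    using prefix_continuousD[OF \<open>prefix_continuous H\<close>, OF H] by blast
  show ?thesis
  proof (intro exI[of _ N] allI impI)
    fix m k' y
    assume "N \<le> m" "p m \<noteq> 0" and k': "K (p(m := 0)) = Some k'" and y: "y \<in> closed_of_name k'"
    define p' where "p' = p(m := 0)"
    show "1 / 2 ^ (N + 1) < \<bar>y - l\<bar>"
    proof (rule ccontr)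
      assume "\<not> ?thesis"
      then have "\<bar>y - l\<bar> \<le> 1 / 2 ^ (N + 1)" by simp
      then obtain r where r: "delta_real r = Some y" "\<forall>t<N. r t = c t"
        using delta_real_prefix_name[OF c] by blast
      have "\<forall>n. p' n \<le> 1" using binary by (simp add: p'_def)
      then have H': "H (baire_pair p' r) = Some (Sort_fun p')"
        using k' y r(1) unfolding p'_def[symmetric] by (rule Sort_reductionD[OF red])
      have "\<forall>t<N. p' t = p t" using \<open>N \<le> m\<close> by (simp add: p'_def)
      then have "\<forall>t<N. baire_pair p' r t = baire_pair p c t"
        using r(2) unfolding baire_pair_def by auto
      then have "Sort_fun p' j = Sort_fun p j" using H' N by blast
      moreover have "Sort_fun p j = 1" using Sort_fun_at_card_zeros[OF fin] by (simp add: j_def)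
      moreover have "Sort_fun p' j = 0"
        using Sort_fun_add_zero[OF fin \<open>p m \<noteq> 0\<close>] by (simp add: j_def p'_def)
      ultimately show False by simp
    qed
  qed
qed

lemma Sort_reduction_escapes_compact:
  assumes red: "Sort_reduction K H" and "prefix_continuous K" and "prefix_continuous H"
    and binary: "\<forall>n. p n \<le> 1" and ones: "\<forall>i\<ge>L. p i = 1" and "compact S"
  shows "\<exists>m\<ge>L. \<forall>k. K (p(m := 0)) = Some k \<longrightarrow> closed_of_name k \<inter> S = {}"
proof (rule ccontr)
  assume "\<not> ?thesis"
  then have "\<exists>k y. K (p(L + j := 0)) = Some k \<and> y \<in> closed_of_name k \<inter> S" for j
    by (auto dest!: spec[of _ "L + j"])
  then obtain ks y where ks: "\<And>j. K (p(L + j := 0)) = Some (ks j)"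
    and y: "\<And>j. y j \<in> closed_of_name (ks j) \<inter> S" by metis
  have "\<forall>j. y j \<in> S" using y by blast
  then obtain l r where r: "strict_mono r" and lim: "(y \<circ> r) \<longlonglongrightarrow> l"
    using \<open>compact S\<close> unfolding compact_def by blast
  have r_ge: "j \<le> r j" for j using seq_suble[OF r] .
  obtain k where k: "K p = Some k" using red binary unfolding Sort_reduction_def by blast
  have "l \<in> closed_of_name k"
  proof (rule closed_of_name_limit[of K p k "\<lambda>j. p(L + r j := 0)" "\<lambda>j. ks (r j)" "y \<circ> r"])
    show "\<forall>t<j. (p(L + r j := 0)) t = p t" for j using r_ge[of j] by simp
    show "(y \<circ> r) j \<in> closed_of_name (ks (r j))" for j using y[of "r j"] by simp
  qed (use \<open>prefix_continuous K\<close> k ks lim in auto)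
  then obtain N where N: "\<forall>m k' y. N \<le> m \<longrightarrow> p m \<noteq> 0 \<longrightarrow> K (p(m := 0)) = Some k' \<longrightarrow>
      y \<in> closed_of_name k' \<longrightarrow> 1 / 2 ^ (N + 1) < \<bar>y - l\<bar>"
    using Sort_reduction_isolates[OF red \<open>prefix_continuous H\<close> binary
        finite_zeros_if_eventually_one[OF ones] k] by blast
  have "\<forall>\<^sub>F j in sequentially. dist ((y \<circ> r) j) l < 1 / 2 ^ (N + 1)"
    using lim by (rule tendstoD) simp
  then obtain J where "\<forall>j\<ge>J. dist (y (r j)) l < 1 / 2 ^ (N + 1)"
    by (auto simp: eventually_sequentially)
  then obtain j where j: "N \<le> j" "dist (y (r j)) l < 1 / 2 ^ (N + 1)"
    using max.cobounded1 max.cobounded2 by blast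
  have "N \<le> L + r j" using j(1) r_ge[of j] by linarith
  moreover have "p (L + r j) \<noteq> 0" using ones by simp
  ultimately have "1 / 2 ^ (N + 1) < \<bar>y (r j) - l\<bar>"
    using N ks y by blast
  then show False using j(2) by (simp add: dist_real_def)
qed

lemma closed_of_name_avoids_compact_near:
  assumes "prefix_continuous K" and k: "K q = Some k" and "compact S"
    and avoid: "closed_of_name k \<inter> S = {}"
  shows "\<exists>N. \<forall>q' k'. (\<forall>t<N. q' t = q t) \<longrightarrow> K q' = Some k' \<longrightarrow> closed_of_name k' \<inter> S = {}"
proof -
  have "S \<subseteq> (\<Union>n. code_interval (k n))" using avoid unfolding closed_of_name_def by auto
  then obtain C where "finite C" and cover: "S \<subseteq> (\<Union>n\<in>C. code_interval (k n))"
    using compactE_image[of S UNIV "\<lambda>n. code_interval (k n)"] \<open>compact S\<close> open_code_interval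
    by auto
  have "\<forall>n. \<exists>N. \<forall>q' k'. (\<forall>t<N. q' t = q t) \<longrightarrow> K q' = Some k' \<longrightarrow> k' n = k n"
    using prefix_continuousD[OF assms(1), OF k] by blast
  then obtain Nf where Nf: "\<And>n. \<forall>q' k'. (\<forall>t<Nf n. q' t = q t) \<longrightarrow> K q' = Some k' \<longrightarrow> k' n = k n"
    by metis
  show ?thesis
  proof (intro exI allI impI)
    fix q' k' assume agree: "\<forall>t<Max (Nf ` C). q' t = q t" and k': "K q' = Some k'"
    have "k' n = k n" if "n \<in> C" for n
    proof -
      have "Nf n \<le> Max (Nf ` C)" using \<open>finite C\<close> that by simp
      then have "\<forall>t<Nf n. q' t = q t" using agree by simp
      then show ?thesis using Nf[of n] k' by blast
    qed
    then have "S \<subseteq> (\<Union>n\<in>C. code_interval (k' n))" using cover by auto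
    then show "closed_of_name k' \<inter> S = {}" unfolding closed_of_name_def by auto
  qed
qed

lemma Sort_reduction_step:
  assumes red: "Sort_reduction K H" and "prefix_continuous K" and "prefix_continuous H"
    and binary: "\<forall>n. p n \<le> 1" and ones: "\<forall>i\<ge>L. p i = 1" and "compact S"
  shows "\<exists>p' L'. (\<forall>n. p' n \<le> 1) \<and> (\<forall>i\<ge>L'. p' i = 1) \<and> L < L' \<and> (\<forall>t<L. p' t = p t) \<and>
           (\<forall>q k. (\<forall>t<L'. q t = p' t) \<longrightarrow> K q = Some k \<longrightarrow> closed_of_name k \<inter> S = {})"
proof -
  obtain m where "L \<le> m" and m: "\<forall>k. K (p(m := 0)) = Some k \<longrightarrow> closed_of_name k \<inter> S = {}"
    using Sort_reduction_escapes_compact[OF red assms(2,3), OF binary ones \<open>compact S\<close>] by blast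
  define p' where "p' = p(m := 0)"
  have binary': "\<forall>n. p' n \<le> 1" using binary by (simp add: p'_def)
  then obtain k where k: "K p' = Some k" using red unfolding Sort_reduction_def by blast
  then obtain N where N: "\<forall>q k'. (\<forall>t<N. q t = p' t) \<longrightarrow> K q = Some k' \<longrightarrow> closed_of_name k' \<inter> S = {}"
    using closed_of_name_avoids_compact_near[OF \<open>prefix_continuous K\<close>, OF k \<open>compact S\<close>] m k
    unfolding p'_def by blast
  show ?thesis
  proof (intro exI conjI)
    show "\<forall>i\<ge>max N (Suc m). p' i = 1" using ones \<open>L \<le> m\<close> by (simp add: p'_def)
    show "\<forall>q k. (\<forall>t<max N (Suc m). q t = p' t) \<longrightarrow> K q = Some k \<longrightarrow> closed_of_name k \<inter> S = {}"
      using N by (meson less_max_iff_disj)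
  qed (use binary' \<open>L \<le> m\<close> in \<open>auto simp: p'_def\<close>)
qed

theorem no_continuous_Sort_reduction:
  assumes "prefix_continuous K" and "prefix_continuous H"
  shows "\<not> Sort_reduction K H"
proof
  assume red: "Sort_reduction K H"
  define stage where "stage = (\<lambda>(p :: baire, L :: nat). (\<forall>n. p n \<le> 1) \<and> (\<forall>i\<ge>L. p i = 1))"
  define next_stage where "next_stage = (\<lambda>n (p :: baire, L :: nat) (p', L').
    L < L' \<and> (\<forall>t<L. p' t = p t) \<and>
    (\<forall>q k. (\<forall>t<L'. q t = p' t) \<longrightarrow> K q = Some k \<longrightarrow> closed_of_name k \<inter> {-real n..real n} = {}))"
  have "\<exists>f. \<forall>n. stage (f n) \<and> next_stage n (f n) (f (Suc n))"
  proof (rule dependent_nat_choice)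
    show "\<exists>x. stage x" by (auto simp: stage_def intro!: exI[of _ "(\<lambda>_. 1, 0)"])
    show "\<exists>y. stage y \<and> next_stage n x y" if "stage x" for x n
      using that Sort_reduction_step[OF red assms, of "fst x" "snd x" "{-real n..real n}"]
      by (auto simp: stage_def next_stage_def split: prod.splits)
  qed
  then obtain f where f: "\<And>n. stage (f n)" "\<And>n. next_stage n (f n) (f (Suc n))" by blast
  define P where "P n = fst (f n)" for n
  define L where "L n = snd (f n)" for n
  have binary: "\<forall>i. P n i \<le> 1" for n using f(1)[of n] by (auto simp: stage_def P_def split: prod.splits)
  have step: "L n < L (Suc n)" "\<forall>t<L n. P (Suc n) t = P n t"
    "\<forall>q k. (\<forall>t<L (Suc n). q t = P (Suc n) t) \<longrightarrow> K q = Some k \<longrightarrow>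
        closed_of_name k \<inter> {-real n..real n} = {}" for n
    using f(2)[of n] by (auto simp: next_stage_def P_def L_def split: prod.splits)
  define p where "p t = P (Suc t) t" for t
  have agree: "\<forall>t<L n. p t = P n t" for n
    unfolding p_def by (rule diagonal_prefix_agree) (use step in \<open>auto simp: strict_mono_Suc_iff\<close>)
  have "\<forall>i. p i \<le> 1" using binary unfolding p_def by blast
  then obtain k x where k: "K p = Some k" and x: "x \<in> closed_of_name k"
    using red unfolding Sort_reduction_def by blast
  define n where "n = nat \<lceil>\<bar>x\<bar>\<rceil>"
  have "x \<in> {-real n..real n}" unfolding n_def by (auto simp: abs_le_iff) linarith+
  moreover have "closed_of_name k \<inter> {-real n..real n} = {}"
    using step(3)[of n] agree[of "Suc n"] k by blast
  ultimately show False using x by blast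
qed

section \<open>Closed choice is not continuously reducible to Sort\<close>

definition admissible :: "baire \<Rightarrow> nat \<Rightarrow> real set \<Rightarrow> bool" where
  "admissible p L R \<longleftrightarrow> compact R \<and> (\<forall>i<L. code_interval (p i) \<inter> R = {})"

definition stage_extends :: "baire \<Rightarrow> nat \<Rightarrow> real set \<Rightarrow> baire \<Rightarrow> nat \<Rightarrow> real set \<Rightarrow> bool" where
  "stage_extends p' L' R' p L R \<longleftrightarrow> L \<le> L' \<and> (\<forall>t<L. p' t = p t) \<and> R' \<subseteq> R"

definition decides :: "(baire \<Rightarrow> baire option) \<Rightarrow> nat \<Rightarrow> baire \<Rightarrow> nat \<Rightarrow> bool" where
  "decides F i p L \<longleftrightarrow> (\<exists>v. \<forall>p' q. (\<forall>t<L. p' t = p t) \<longrightarrow> F p' = Some q \<longrightarrow> q i = v)"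

lemma measure_diff_interval_ge:
  fixes R :: "real set"
  assumes "compact R" and "0 \<le> e"
  shows "measure lborel R - 2 * e \<le> measure lborel (R - {c - e <..< c + e})"
proof -
  let ?I = "{c - e <..< c + e}"
  have R: "R \<in> fmeasurable lborel" using \<open>compact R\<close> by (rule fmeasurable_compact)
  have "R \<inter> ?I \<in> sets lborel"
    using borel_closed[OF compact_imp_closed[OF \<open>compact R\<close>]] by simp
  then have "measure lborel (R - (R \<inter> ?I)) = measure lborel R - measure lborel (R \<inter> ?I)"
    using R by (intro measure_Diff) (auto simp: fmeasurable_def)
  moreover have "R - (R \<inter> ?I) = R - ?I" by blast
  moreover have "measure lborel (R \<inter> ?I) \<le> measure lborel {c - e .. c + e}"
    using R by (intro measure_mono_fmeasurable fmeasurable_compact) auto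
  ultimately show ?thesis using \<open>0 \<le> e\<close> by simp
qed

lemma decides_catch_step:
  assumes adm: "admissible p L R" and "decides F i p L"
  shows "\<exists>c R'. admissible (p(L := c)) (Suc L) R' \<and> R' \<subseteq> R \<and>
           measure lborel R - 4 / 2 ^ i \<le> measure lborel R' \<and>
           (\<forall>p' q y. (\<forall>t<L. p' t = p t) \<longrightarrow> F p' = Some q \<longrightarrow> delta_real q = Some y \<longrightarrow>
              y \<in> code_interval c)"
proof -
  obtain v where v: "\<forall>p' q. (\<forall>t<L. p' t = p t) \<longrightarrow> F p' = Some q \<longrightarrow> q i = v"
    using \<open>decides F i p L\<close> unfolding decides_def by blast
  define x where "x = real_of_rat (nu_rat v)"
  obtain c where c: "code_interval c = {x - 2 / 2 ^ i <..< x + 2 / 2 ^ i}"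
    using code_interval_surj[of "nu_rat v - 2 / 2 ^ i" "nu_rat v + 2 / 2 ^ i"]
    by (auto simp: x_def of_rat_diff of_rat_add of_rat_divide of_rat_power)
  define R' where "R' = R - code_interval c"
  have "admissible (p(L := c)) (Suc L) R'"
    using adm compact_diff[OF _ open_code_interval]
    unfolding admissible_def R'_def by (auto simp: less_Suc_eq)
  moreover have "measure lborel R - 4 / 2 ^ i \<le> measure lborel R'"
    using measure_diff_interval_ge[of R "2 / 2 ^ i" x] adm
    unfolding R'_def c admissible_def by simp
  moreover have "y \<in> code_interval c"
    if "\<forall>t<L. p' t = p t" "F p' = Some q" "delta_real q = Some y" for p' q y
  proof -
    have "\<bar>x - y\<bar> \<le> 1 / 2 ^ i"
      using delta_real_approx[OF that(3), of i] v that(1,2) unfolding x_def by simp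
    moreover have "(1::real) / 2 ^ i < 2 / 2 ^ i" by (simp add: divide_strict_right_mono)
    ultimately show ?thesis unfolding c by (auto simp: abs_le_iff)
  qed
  ultimately show ?thesis unfolding R'_def by blast
qed

definition choice_step ::
  "(baire \<Rightarrow> baire option) \<Rightarrow> real \<Rightarrow> baire \<Rightarrow> nat \<Rightarrow> real set \<Rightarrow> baire \<Rightarrow> nat \<Rightarrow> real set \<Rightarrow> bool"
where
  "choice_step G d p L R p' L' R' \<longleftrightarrow> stage_extends p' L' R' p L R \<and> L < L' \<and>
     ((R' = R \<and>
       (\<exists>i. \<forall>p'' L'' R''. admissible p'' L'' R'' \<longrightarrow> stage_extends p'' L'' R'' p L R \<longrightarrow>
          measure lborel R - d \<le> measure lborel R'' \<longrightarrow> \<not> decides G i p'' L'')) \<or>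
      (measure lborel R - 2 * d \<le> measure lborel R' \<and>
       (\<forall>p'' q y. (\<forall>t<L'. p'' t = p' t) \<longrightarrow> G p'' = Some q \<longrightarrow> delta_real q = Some y \<longrightarrow>
          (\<exists>j<L'. y \<in> code_interval (p' j)))))"

lemma exists_pow2_le:
  fixes d :: real
  assumes "0 < d"
  shows "\<exists>i. 4 / 2 ^ i \<le> d"
proof -
  have "\<forall>\<^sub>F i in sequentially. 4 * (1 / 2 ^ i) < d"
    using tendsto_mult_right_zero[OF inverse_pow2_tendsto_zero, of 4] assms
    by (rule order_tendstoD(2))
  then obtain N where "\<forall>i\<ge>N. 4 / 2 ^ i < d" by (auto simp: eventually_sequentially)
  then show ?thesis by (auto intro: less_imp_le)
qed

lemma choice_step_exists:
  assumes adm: "admissible p L R" and "0 < d"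
  shows "\<exists>p' L' R'. admissible p' L' R' \<and> choice_step G d p L R p' L' R'"
proof -
  obtain i where i: "4 / 2 ^ i \<le> d"
    using exists_pow2_le[OF \<open>0 < d\<close>] by blast
  show ?thesis
  proof (cases "\<exists>p'' L'' R''. admissible p'' L'' R'' \<and> stage_extends p'' L'' R'' p L R \<and>
                 measure lborel R - d \<le> measure lborel R'' \<and> decides G i p'' L''")
    case False
    then have "choice_step G d p L R (p(L := 0)) (Suc L) R"
      unfolding choice_step_def by (intro conjI disjI1 exI[of _ i]) (auto simp: stage_extends_def)
    moreover have "admissible (p(L := 0)) (Suc L) R"
      using adm unfolding admissible_def by (auto simp: less_Suc_eq code_interval_def)
    ultimately show ?thesis by blast
  next
    case True
    then obtain p'' L'' R'' where adm'': "admissible p'' L'' R''"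
      and ext'': "stage_extends p'' L'' R'' p L R" and big: "measure lborel R - d \<le> measure lborel R''"
      and "decides G i p'' L''" by blast
    then obtain c R' where adm': "admissible (p''(L'' := c)) (Suc L'') R'" and "R' \<subseteq> R''"
      and loss: "measure lborel R'' - 4 / 2 ^ i \<le> measure lborel R'"
      and catch: "\<forall>p' q y. (\<forall>t<L''. p' t = p'' t) \<longrightarrow> G p' = Some q \<longrightarrow> delta_real q = Some y \<longrightarrow>
              y \<in> code_interval c"
      using decides_catch_step[OF adm'' \<open>decides G i p'' L''\<close>] by blast
    have "stage_extends (p''(L'' := c)) (Suc L'') R' p L R"
      using ext'' \<open>R' \<subseteq> R''\<close> unfolding stage_extends_def by auto
    moreover have "L < Suc L''" using ext'' unfolding stage_extends_def by simp
    moreover have "measure lborel R - 2 * d \<le> measure lborel R'" using big loss i by simp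
    moreover have "\<exists>j<Suc L''. y \<in> code_interval ((p''(L'' := c)) j)"
      if "\<forall>t<Suc L''. p3 t = (p''(L'' := c)) t" "G p3 = Some q" "delta_real q = Some y" for p3 q y
    proof -
      have "\<forall>t<L''. p3 t = p'' t" using that(1) by auto
      then show ?thesis using catch that(2,3) by (intro exI[of _ L'']) auto
    qed
    ultimately show ?thesis using adm' unfolding choice_step_def by blast
  qed
qed

definition choice_loss :: "nat \<Rightarrow> real" where
  "choice_loss n = (1 / 8) ^ (n + 1)"

locale choice_stages =
  fixes F :: "nat \<Rightarrow> baire \<Rightarrow> baire option"
    and P :: "nat \<Rightarrow> baire" and L :: "nat \<Rightarrow> nat" and R :: "nat \<Rightarrow> real set"
  assumes admissible_stage: "admissible (P n) (L n) (R n)"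
    and initial_stage: "R 0 = {0..1}"
    and step: "choice_step (F n) (choice_loss n) (P n) (L n) (R n) (P (Suc n)) (L (Suc n)) (R (Suc n))"

lemma choice_stages_exist: "\<exists>P L R. choice_stages F P L R"
proof -
  define stage where "stage n x \<longleftrightarrow>
    admissible (fst x) (fst (snd x)) (snd (snd x)) \<and> (n = 0 \<longrightarrow> snd (snd x) = {0..1})"
    for n :: nat and x :: "baire \<times> nat \<times> real set"
  define next_stage where "next_stage n x y \<longleftrightarrow> choice_step (F n) (choice_loss n)
      (fst x) (fst (snd x)) (snd (snd x)) (fst y) (fst (snd y)) (snd (snd y))"
    for n and x y :: "baire \<times> nat \<times> real set"
  have "\<exists>f. \<forall>n. stage n (f n) \<and> next_stage n (f n) (f (Suc n))"
  proof (rule dependent_nat_choice)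
    show "\<exists>x. stage 0 x"
      by (rule exI[of _ "(\<lambda>_. 0, 0, {0..1})"]) (simp add: stage_def admissible_def)
    show "\<exists>y. stage (Suc n) y \<and> next_stage n x y" if x: "stage n x" for x n
    proof -
      obtain p' L' R' where "admissible p' L' R'"
        and "choice_step (F n) (choice_loss n) (fst x) (fst (snd x)) (snd (snd x)) p' L' R'"
        using choice_step_exists[of "fst x" "fst (snd x)" "snd (snd x)" "choice_loss n" "F n"] x
        unfolding stage_def choice_loss_def by auto
      then show ?thesis unfolding stage_def next_stage_def by (intro exI[of _ "(p', L', R')"]) simp
    qed
  qed
  then obtain f where "\<And>n. stage n (f n)" "\<And>n. next_stage n (f n) (f (Suc n))" by blast
  then have "choice_stages F (\<lambda>n. fst (f n)) (\<lambda>n. fst (snd (f n))) (\<lambda>n. snd (snd (f n)))"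
    unfolding stage_def next_stage_def by unfold_locales blast+
  then show ?thesis by blast
qed

text \<open>\<open>2/7 * (1/8)^n\<close> is the total loss \<open>\<Sum>m\<ge>n. 2 * (1/8)^(m+1)\<close> still allowed from stage \<open>n\<close> on.\<close>

lemma potential_mono:
  fixes \<mu> :: "nat \<Rightarrow> real"
  assumes step: "\<And>n. \<mu> n - 2 * (1 / 8) ^ (n + 1) \<le> \<mu> (Suc n)" and "n \<le> m"
  shows "\<mu> n - 2 / 7 * (1 / 8) ^ n \<le> \<mu> m - 2 / 7 * (1 / 8) ^ m"
  using \<open>n \<le> m\<close>
proof (induction m rule: dec_induct)
  case (step m)
  have "2 / 7 * (1 / 8 :: real) ^ m - 2 / 7 * (1 / 8) ^ Suc m = 2 * (1 / 8) ^ (m + 1)" by simp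
  then show ?case using step.IH assms(1)[of m] by linarith
qed simp

lemma decides_eventually:
  assumes "prefix_continuous G" and "G p = Some q"
    and agree: "\<And>m. \<forall>t<L m. p t = P m t" and L_ge: "\<And>m. m \<le> L m"
  shows "\<exists>M. \<forall>m\<ge>M. decides G i (P m) (L m)"
proof -
  obtain N where N: "\<forall>p' q'. (\<forall>t<N. p' t = p t) \<longrightarrow> G p' = Some q' \<longrightarrow> q' i = q i"
    using prefix_continuousD[OF assms(1), OF assms(2)] by blast
  have "decides G i (P m) (L m)" if "N \<le> m" for m
    unfolding decides_def
  proof (intro exI allI impI)
    fix p' q' assume p': "\<forall>t<L m. p' t = P m t" and "G p' = Some q'"
    have "N \<le> L m" using L_ge[of m] \<open>N \<le> m\<close> by linarith
    then have "\<forall>t<N. p' t = p t" using p' agree[of m] by simp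
    then show "q' i = q i" using N \<open>G p' = Some q'\<close> by blast
  qed
  then show ?thesis by blast
qed

context choice_stages
begin

definition limit_name :: baire where
  "limit_name t = P (Suc t) t"

lemma stage_extends_Suc: "stage_extends (P (Suc n)) (L (Suc n)) (R (Suc n)) (P n) (L n) (R n)"
  using step[of n] unfolding choice_step_def by blast

lemma strict_mono_L: "strict_mono L"
  using step unfolding choice_step_def strict_mono_Suc_iff by blast

lemma L_ge: "n \<le> L n"
  using seq_suble[OF strict_mono_L] .

lemma agree_Suc: "\<forall>t<L n. P (Suc n) t = P n t"
  using stage_extends_Suc unfolding stage_extends_def by blast

lemma decseq_R: "decseq R"
  using stage_extends_Suc unfolding stage_extends_def by (intro decseq_SucI) blast

lemma stage_extends_le:
  assumes "n \<le> m"
  shows "stage_extends (P m) (L m) (R m) (P n) (L n) (R n)"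
  using prefixes_agree_mono[OF agree_Suc strict_mono_mono[OF strict_mono_L] assms]
    monoD[OF strict_mono_mono[OF strict_mono_L] assms] decseqD[OF decseq_R assms]
  unfolding stage_extends_def by blast

lemma limit_name_agree: "\<forall>t<L n. limit_name t = P n t"
  unfolding limit_name_def using agree_Suc strict_mono_L by (rule diagonal_prefix_agree)

lemma measure_potential:
  assumes "n \<le> m"
  shows "measure lborel (R n) - 2 / 7 * (1 / 8) ^ n \<le> measure lborel (R m) - 2 / 7 * (1 / 8) ^ m"
proof (rule potential_mono[OF _ assms])
  show "measure lborel (R k) - 2 * (1 / 8) ^ (k + 1) \<le> measure lborel (R (Suc k))" for k
    using step[of k] unfolding choice_step_def choice_loss_def by auto
qed

lemma R_nonempty: "R n \<noteq> {}"
proof -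
  have "measure lborel (R 0) - 2 / 7 \<le> measure lborel (R n) - 2 / 7 * (1 / 8) ^ n"
    using measure_potential[of 0 n] by simp
  moreover have "(0::real) \<le> (1 / 8) ^ n" and "measure lborel (R 0) = 1"
    using initial_stage by simp_all
  ultimately have "0 < measure lborel (R n)" by linarith
  then show ?thesis by auto
qed

lemma limit_name_nonempty: "closed_of_name limit_name \<noteq> {}"
proof -
  have "compact (R n)" for n using admissible_stage[of n] unfolding admissible_def by blast
  then have "\<Inter> (range R) \<noteq> {}"
    using R_nonempty decseq_R by (intro compact_nest) (auto simp: decseq_def)
  then obtain x where x: "\<And>n. x \<in> R n" by blast
  have "x \<notin> code_interval (P (Suc t) t)" for t
  proof -
    have "t < L (Suc t)" using L_ge[of "Suc t"] by simp
    then show ?thesis using admissible_stage[of "Suc t"] x[of "Suc t"] unfolding admissible_def by blast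
  qed
  then have "x \<in> closed_of_name limit_name" unfolding closed_of_name_def limit_name_def by blast
  then show ?thesis by blast
qed

lemma measure_blocked_extension:
  assumes "R (Suc n) = R n" and "Suc n \<le> m"
  shows "measure lborel (R n) - choice_loss n \<le> measure lborel (R m)"
proof -
  have "measure lborel (R n) - 2 / 7 * (1 / 8) ^ Suc n \<le> measure lborel (R m) - 2 / 7 * (1 / 8) ^ m"
    using measure_potential[OF \<open>Suc n \<le> m\<close>] \<open>R (Suc n) = R n\<close> by simp
  moreover have "2 / 7 * (1 / 8) ^ Suc n \<le> choice_loss n" and "(0::real) \<le> (1 / 8) ^ m"
    unfolding choice_loss_def by simp_all
  ultimately show ?thesis by linarith
qed

lemma limit_name_defeats:
  assumes "prefix_continuous (F n)" and q: "F n limit_name = Some q" and y: "delta_real q = Some y"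
  shows "y \<notin> closed_of_name limit_name"
  using step[of n] unfolding choice_step_def
proof (elim conjE disjE exE)
  fix i assume "R (Suc n) = R n" and blocked: "\<forall>p'' L'' R''. admissible p'' L'' R'' \<longrightarrow>
    stage_extends p'' L'' R'' (P n) (L n) (R n) \<longrightarrow> measure lborel (R n) - choice_loss n \<le> measure lborel R'' \<longrightarrow>
    \<not> decides (F n) i p'' L''"
  obtain M where M: "\<forall>m\<ge>M. decides (F n) i (P m) (L m)"
    using decides_eventually[OF assms(1), OF q limit_name_agree L_ge] by blast
  define m where "m = max M (Suc n)"
  have "measure lborel (R n) - choice_loss n \<le> measure lborel (R m)"
    using measure_blocked_extension[OF \<open>R (Suc n) = R n\<close>] by (simp add: m_def)
  moreover have "stage_extends (P m) (L m) (R m) (P n) (L n) (R n)"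
    by (rule stage_extends_le) (simp add: m_def)
  moreover have "decides (F n) i (P m) (L m)" using M by (simp add: m_def)
  ultimately show ?thesis using blocked admissible_stage[of m] by blast
next
  assume "\<forall>p'' q y. (\<forall>t<L (Suc n). p'' t = P (Suc n) t) \<longrightarrow> F n p'' = Some q \<longrightarrow>
    delta_real q = Some y \<longrightarrow> (\<exists>j<L (Suc n). y \<in> code_interval (P (Suc n) j))"
  then obtain j where "j < L (Suc n)" "y \<in> code_interval (P (Suc n) j)"
    using limit_name_agree q y by blast
  then have "y \<in> code_interval (limit_name j)" using limit_name_agree[of "Suc n"] by simp
  then show ?thesis unfolding closed_of_name_def by blast
qed

end

theorem no_countable_continuous_choice:
  fixes F :: "nat \<Rightarrow> baire \<Rightarrow> baire option"
  assumes "\<And>n. prefix_continuous (F n)"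
  shows "\<exists>p. closed_of_name p \<noteq> {} \<and>
           (\<forall>n q y. F n p = Some q \<longrightarrow> delta_real q = Some y \<longrightarrow> y \<notin> closed_of_name p)"
proof -
  obtain P L R where "choice_stages F P L R" using choice_stages_exist by blast
  then interpret choice_stages F P L R .
  show ?thesis
  proof (intro exI[of _ limit_name] conjI allI impI)
    show "closed_of_name limit_name \<noteq> {}" by (rule limit_name_nonempty)
    show "y \<notin> closed_of_name limit_name"
      if "F n limit_name = Some q" and "delta_real q = Some y" for n q y
      by (rule limit_name_defeats[OF assms that])
  qed
qed

section \<open>Weihrauch reductions are continuous reductions\<close>

definition reduction_realizer ::
  "(nat \<Rightarrow> nat) \<Rightarrow> (nat \<Rightarrow> nat) \<Rightarrow> (baire \<Rightarrow> baire option) \<Rightarrow> baire \<Rightarrow> baire option" where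
  "reduction_realizer aH aK G =
     (\<lambda>p. case assoc_eval aK p of
        None \<Rightarrow> None
      | Some k \<Rightarrow> (case G k of None \<Rightarrow> None | Some r \<Rightarrow> assoc_eval aH (baire_pair p r)))"

lemma weihrauch_leE:
  assumes "weihrauch_le dX dY D f dZ dW E g"
  obtains aH aK where
    "\<And>G. is_realizer dZ dW E g G \<Longrightarrow> is_realizer dX dY D f (reduction_realizer aH aK G)"
  using assms unfolding weihrauch_le_def reduction_realizer_def by blast

lemma reduction_realizer_SomeE:
  assumes "is_realizer dX dY D f (reduction_realizer aH aK G)" and "dX p = Some x" and "x \<in> D"
  obtains k r q y where "assoc_eval aK p = Some k" and "G k = Some r"
    and "assoc_eval aH (baire_pair p r) = Some q" and "dY q = Some y" and "y \<in> f x"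
proof -
  obtain q y where q: "reduction_realizer aH aK G p = Some q" and "dY q = Some y" "y \<in> f x"
    using assms unfolding is_realizer_def by blast
  moreover from q obtain k where "assoc_eval aK p = Some k"
    unfolding reduction_realizer_def by (cases "assoc_eval aK p") auto
  moreover from q this obtain r where "G k = Some r"
    unfolding reduction_realizer_def by (cases "G k") auto
  ultimately show ?thesis using that unfolding reduction_realizer_def by simp
qed

lemma is_realizer_update:
  assumes "is_realizer dX dY D f G"
    and "\<And>x. dX k = Some x \<Longrightarrow> x \<in> D \<Longrightarrow> \<exists>y. dY r = Some y \<and> y \<in> f x"
  shows "is_realizer dX dY D f (G(k := Some r))"
  using assms unfolding is_realizer_def by auto

lemma closed_choice_realizer_exists:
  "\<exists>G. is_realizer delta_closed delta_real CR_dom CR_prob G \<and>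
     (\<forall>k r. G k = Some r \<longrightarrow> closed_of_name k \<noteq> {})"
proof -
  define G where "G k = (if closed_of_name k = {} then None
      else Some (SOME r. delta_real r = Some (SOME x. x \<in> closed_of_name k)))" for k
  have "is_realizer delta_closed delta_real CR_dom CR_prob G"
    unfolding is_realizer_def CR_dom_def CR_prob_def delta_closed_eq
  proof (intro allI impI)
    fix k A assume "Some (closed_of_name k) = Some A" and "A \<in> {A. closed A \<and> A \<noteq> {}}"
    then have A: "A = closed_of_name k" "A \<noteq> {}" by auto
    define x where "x = (SOME x. x \<in> A)"
    have "x \<in> A" unfolding x_def using A(2) by (simp add: some_in_eq)
    moreover have "delta_real (SOME r. delta_real r = Some x) = Some x"
      using someI_ex[OF delta_real_surj] .
    ultimately show "\<exists>q y. G k = Some q \<and> delta_real q = Some y \<and> y \<in> A"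
      unfolding G_def x_def using A by auto
  qed
  moreover have "\<forall>k r. G k = Some r \<longrightarrow> closed_of_name k \<noteq> {}"
    unfolding G_def by simp
  ultimately show ?thesis by blast
qed

lemma Sort_reduction_if_weihrauch_le:
  assumes "weihrauch_le delta_cantor delta_cantor Sort_dom Sort_prob delta_closed delta_real CR_dom CR_prob"
  shows "\<exists>K H. prefix_continuous K \<and> prefix_continuous H \<and> Sort_reduction K H"
proof -
  obtain aH aK where red: "\<And>G. is_realizer delta_closed delta_real CR_dom CR_prob G \<Longrightarrow>
      is_realizer delta_cantor delta_cantor Sort_dom Sort_prob (reduction_realizer aH aK G)"
    using weihrauch_leE[OF assms] by blast
  obtain G0 where G0: "is_realizer delta_closed delta_real CR_dom CR_prob G0"
    and G0_nonempty: "\<And>k r. G0 k = Some r \<Longrightarrow> closed_of_name k \<noteq> {}"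
    using closed_choice_realizer_exists by blast
  have "Sort_reduction (assoc_eval aK) (assoc_eval aH)"
    unfolding Sort_reduction_def
  proof (intro allI impI)
    fix p :: baire assume binary: "\<forall>n. p n \<le> 1"
    then have p: "delta_cantor p = Some p" "p \<in> Sort_dom"
      unfolding delta_cantor_def Sort_dom_def by auto
    obtain k r where k: "assoc_eval aK p = Some k" and "G0 k = Some r"
      by (rule reduction_realizer_SomeE[OF red[OF G0], OF p])
    then have "closed_of_name k \<noteq> {}" using G0_nonempty by blast
    moreover have "assoc_eval aH (baire_pair p r') = Some (Sort_fun p)"
      if "x \<in> closed_of_name k" "delta_real r' = Some x" for x r'
    proof -
      have "is_realizer delta_closed delta_real CR_dom CR_prob (G0(k := Some r'))"
        by (rule is_realizer_update[OF G0]) (use that in \<open>auto simp: delta_closed_eq CR_prob_def\<close>)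
      then obtain k' r'' q y where "assoc_eval aK p = Some k'" and "(G0(k := Some r')) k' = Some r''"
        and "assoc_eval aH (baire_pair p r'') = Some q" and "delta_cantor q = Some y"
        and "y \<in> Sort_prob p"
        by (rule reduction_realizer_SomeE[OF red, OF _ p])
      with k show ?thesis unfolding delta_cantor_def Sort_prob_def by (simp split: if_splits)
    qed
    ultimately show "\<exists>k. assoc_eval aK p = Some k \<and> closed_of_name k \<noteq> {} \<and>
        (\<forall>x r. x \<in> closed_of_name k \<longrightarrow> delta_real r = Some x \<longrightarrow>
           assoc_eval aH (baire_pair p r) = Some (Sort_fun p))"
      using k by blast
  qed
  then show ?thesis using prefix_continuous_assoc_eval by blast
qed

definition sorted_seq :: "nat \<Rightarrow> baire" where
  "sorted_seq n = (case n of 0 \<Rightarrow> (\<lambda>_. 0) | Suc m \<Rightarrow> (\<lambda>i. if i < m then 0 else 1))"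

lemma Sort_fun_in_range_sorted_seq: "\<exists>n. Sort_fun p = sorted_seq n"
proof (cases "finite {i. p i = 0}")
  case True
  then show ?thesis unfolding Sort_fun_def sorted_seq_def
    by (intro exI[of _ "Suc (card {i. p i = 0})"]) simp
next
  case False
  then show ?thesis unfolding Sort_fun_def sorted_seq_def by (intro exI[of _ 0]) simp
qed

lemma countable_choice_if_weihrauch_le:
  assumes "weihrauch_le delta_closed delta_real CR_dom CR_prob delta_cantor delta_cantor Sort_dom Sort_prob"
  shows "\<exists>F :: nat \<Rightarrow> baire \<Rightarrow> baire option. (\<forall>n. prefix_continuous (F n)) \<and>
           (\<forall>p. closed_of_name p \<noteq> {} \<longrightarrow>
              (\<exists>n q y. F n p = Some q \<and> delta_real q = Some y \<and> y \<in> closed_of_name p))"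
proof -
  obtain aH aK where red: "\<And>G. is_realizer delta_cantor delta_cantor Sort_dom Sort_prob G \<Longrightarrow>
      is_realizer delta_closed delta_real CR_dom CR_prob (reduction_realizer aH aK G)"
    using weihrauch_leE[OF assms] by blast
  define G0 where "G0 k = (if \<forall>n. k n \<le> 1 then Some (Sort_fun k) else None)" for k :: baire
  have G0: "is_realizer delta_cantor delta_cantor Sort_dom Sort_prob G0"
    unfolding is_realizer_def delta_cantor_def Sort_prob_def G0_def
    by (auto simp: Sort_fun_def)
  have choice: "\<exists>n q y. assoc_eval aH (baire_pair p (sorted_seq n)) = Some q \<and> delta_real q = Some y \<and>
          y \<in> closed_of_name p" if "closed_of_name p \<noteq> {}" for p
  proof -
    have "delta_closed p = Some (closed_of_name p)" "closed_of_name p \<in> CR_dom"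
      using that closed_closed_of_name unfolding delta_closed_eq CR_dom_def by auto
    then obtain k r q y where "G0 k = Some r" and "assoc_eval aH (baire_pair p r) = Some q"
      and "delta_real q = Some y" and "y \<in> CR_prob (closed_of_name p)"
      by (rule reduction_realizer_SomeE[OF red[OF G0]])
    moreover obtain n where "r = sorted_seq n"
      using \<open>G0 k = Some r\<close> Sort_fun_in_range_sorted_seq unfolding G0_def
      by (auto split: if_splits)
    ultimately show ?thesis unfolding CR_prob_def by blast
  qed
  have "prefix_continuous (\<lambda>p. assoc_eval aH (baire_pair p (sorted_seq n)))" for n
    by (rule prefix_continuous_pair_left[OF prefix_continuous_assoc_eval])
  then show ?thesis
    by (intro exI[where x = "\<lambda>n p. assoc_eval aH (baire_pair p (sorted_seq n))"] conjI allI impI)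
      (use choice in auto)
qed

theorem proposition3p5:
  shows "\<not> weihrauch_le delta_cantor delta_cantor Sort_dom Sort_prob
                        delta_closed delta_real CR_dom CR_prob
       \<and> \<not> weihrauch_le delta_closed delta_real CR_dom CR_prob
                        delta_cantor delta_cantor Sort_dom Sort_prob"
proof
  show "\<not> weihrauch_le delta_cantor delta_cantor Sort_dom Sort_prob
                        delta_closed delta_real CR_dom CR_prob"
    using Sort_reduction_if_weihrauch_le no_continuous_Sort_reduction by blast
  show "\<not> weihrauch_le delta_closed delta_real CR_dom CR_prob
                        delta_cantor delta_cantor Sort_dom Sort_prob"
    using countable_choice_if_weihrauch_le no_countable_continuous_choice by blast
qed

end
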